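(* Algorithm $\mathsf{LA}$ is deterministic and uses $O(n)$ queries to $f$. On every instance $(f,V,B)$ it returns a set $S$ with $c(S)\le B$ and $$\mathrm{opt}\le 19\,f(S),$$ where $\mathrm{opt}=\max\{f(T):T\subseteq V,\ c(T)\le B\}$.
   Context: Setting: $V$ is a finite ground set of size $n$. $f:2^V\to\mathbb{R}_{\ge 0}$ is a non-negative submodular set function with $f(\emptyset)=0$. Each $e\in V$ has a cost $c(e)>0$, and $c(S)=\sum_{e\in S}c(e)$. $B>0$ is a budget, and $c(e)\le B$ for every $e\in V$. A query is one evaluation of $f$ on a set. The notation $f(e\mid S)=f(S\cup\{e\})-f(S)$ is used. Algorithm $\mathsf{LA}$ on $(f,V,B)$ runs as follows. 1. Set $V_1=\{e\in V: c(e)\le B/2\}$ and $X=Y=\emptyset$. Let $e_{\max}\in\arg\max_{e\in V}f(e)$. 2. Main loop: process each $e\in V_1$ once, in an arbitrary fixed order. Among the sets $Z\in\{X,Y\}$ satisfying $f(e\mid Z)/c(e)\ge f(Z)/B$, choose one maximizing $f(e\mid Z)/c(e)$, breaking ties arbitrarily. If such a $Z$ exists, add $e$ to $Z$. 3. After the loop, for $T\in\{X,Y\}$ let $T(j)$ denote the set of the last $j$ elements added to $T$. Let $X'$ be the set $X(j)$ of largest cost among those with $0\le j\le|X|$ and $c(X(j))\le B$. Define $Y'$ from $Y$ in the same way. 4. Return the set $S$ among $X'$, $Y'$ and $\{e_{\max}\}$ with the largest $f$ value. *)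

theory Defs
  imports Complex_Main
begin

definition submodular_on :: "'a set \<Rightarrow> ('a set \<Rightarrow> real) \<Rightarrow> bool" where
  "submodular_on V f \<longleftrightarrow>
     (\<forall>A B. A \<subseteq> V \<longrightarrow> B \<subseteq> V \<longrightarrow> f (A \<union> B) + f (A \<inter> B) \<le> f A + f B)"

text \<open>A valid instance: ground set V = set vs (vs lists V without repetition, fixing the
  arbitrary processing order), f non-negative submodular with f {} = 0, positive costs
  each at most the budget B > 0.\<close>
definition valid_instance ::
  "('a set \<Rightarrow> real) \<Rightarrow> ('a \<Rightarrow> real) \<Rightarrow> real \<Rightarrow> 'a list \<Rightarrow> bool" where
  "valid_instance f c B vs \<longleftrightarrow>
     distinct vs \<and> vs \<noteq> [] \<and>
     submodular_on (set vs) f \<and> (\<forall>S. S \<subseteq> set vs \<longrightarrow> 0 \<le> f S) \<and> f {} = 0 \<and>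
     0 < B \<and> (\<forall>e\<in>set vs. 0 < c e \<and> c e \<le> B)"

definition opt :: "('a set \<Rightarrow> real) \<Rightarrow> ('a \<Rightarrow> real) \<Rightarrow> real \<Rightarrow> 'a set \<Rightarrow> real" where
  "opt f c B V = Max {f T | T. T \<subseteq> V \<and> sum c T \<le> B}"

section \<open>Algorithm LA, with every evaluation of f counted as one query\<close>

text \<open>Loop state: (xs, ys, fX, fY, q, i) where xs / ys hold X / Y in reverse order of
  insertion (most recently added first), fX = f X and fY = f Y are the values obtained
  from earlier queries, q is the number of queries so far, i the step index.
  tb i decides ties at step i (True: prefer X).\<close>
definition la_step ::
  "('a set \<Rightarrow> real) \<Rightarrow> ('a \<Rightarrow> real) \<Rightarrow> real \<Rightarrow> (nat \<Rightarrow> bool) \<Rightarrow>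
   'a list \<times> 'a list \<times> real \<times> real \<times> nat \<times> nat \<Rightarrow> 'a \<Rightarrow>
   'a list \<times> 'a list \<times> real \<times> real \<times> nat \<times> nat" where
  "la_step f c B tb st e =
     (case st of (xs, ys, fx, fy, q, i) \<Rightarrow>
       (let fxe = f (insert e (set xs));      \<comment> \<open>query\<close>
            fye = f (insert e (set ys));      \<comment> \<open>query\<close>
            gx = (fxe - fx) / c e;
            gy = (fye - fy) / c e;
            okx = (fx / B \<le> gx);
            oky = (fy / B \<le> gy);
            toX = (okx \<and> (\<not> oky \<or> gy < gx \<or> (gx = gy \<and> tb i)));
            toY = (oky \<and> \<not> toX)
        in if toX then (e # xs, ys, fxe, fy, q + 2, Suc i)
           else if toY then (xs, e # ys, fx, fye, q + 2, Suc i)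
           else (xs, ys, fx, fy, q + 2, Suc i)))"

definition la_loop ::
  "('a set \<Rightarrow> real) \<Rightarrow> ('a \<Rightarrow> real) \<Rightarrow> real \<Rightarrow> (nat \<Rightarrow> bool) \<Rightarrow> 'a list \<Rightarrow>
   'a list \<times> 'a list \<times> real \<times> real \<times> nat \<times> nat" where
  "la_loop f c B tb vs =
     foldl (la_step f c B tb) ([], [], f {}, f {}, 1, 0) (filter (\<lambda>e. c e \<le> B / 2) vs)"

definition emax_scan :: "('a set \<Rightarrow> real) \<Rightarrow> 'a list \<Rightarrow> 'a \<times> real \<times> nat" where
  "emax_scan f vs =
     foldl (\<lambda>(b, fb, q) e. let fe = f {e} in if fb < fe then (e, fe, Suc q) else (b, fb, Suc q))
           (hd vs, f {hd vs}, 1) (tl vs)"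

text \<open>Given T stored most-recent-first in zs, T(j) = set (take j zs) is the set of the last j
  elements added; return the T(j) of largest cost among 0 \<le> j \<le> |T| with c(T(j)) \<le> B.\<close>
definition last_feasible :: "('a \<Rightarrow> real) \<Rightarrow> real \<Rightarrow> 'a list \<Rightarrow> 'a set" where
  "last_feasible c B zs =
     set (take (arg_max (\<lambda>j. sum c (set (take j zs)))
                        (\<lambda>j. j \<le> length zs \<and> sum c (set (take j zs)) \<le> B)) zs)"

text \<open>Algorithm LA: returns (S, total number of queries).\<close>
definition LA ::
  "('a set \<Rightarrow> real) \<Rightarrow> ('a \<Rightarrow> real) \<Rightarrow> real \<Rightarrow> (nat \<Rightarrow> bool) \<Rightarrow> 'a list \<Rightarrow> 'a set \<times> nat" where
  "LA f c B tb vs =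
     (case emax_scan f vs of (em, fem, q1) \<Rightarrow>
      case la_loop f c B tb vs of (xs, ys, fx, fy, q2, i) \<Rightarrow>
        (let X' = last_feasible c B xs;
             Y' = last_feasible c B ys;
             fX' = f X';    \<comment> \<open>query\<close>
             fY' = f Y';    \<comment> \<open>query\<close>
             q = q1 + q2 + 2
         in if fY' \<le> fX' \<and> fem \<le> fX' then (X', q)
            else if fem \<le> fY' then (Y', q)
            else ({em}, q)))"

end

theory Submission
  imports Defs
begin

text \<open>Both X and Y only grow by elements whose marginal density is at least their current
  value divided by B. When an element u is processed and not put into X, its marginal to the X of
  that moment is at most c(u) f(X)/B, plus its gain to Y if it went to Y; by submodularity this
  bound persists for the final X. Summing over the elements of cost at most B/2 of an optimal set O,
  and using that the gains to Y add up to f(Y), gives f(O \<union> X) \<le> 2 f(X) + f(Y); together with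
  the symmetric bound these elements of O are worth at most 3 f(X) + 3 f(Y), and the at most one
  more expensive element of O is worth at most f {e_max}. Keeping only the most recent elements of
  X that fit into the budget loses a factor at most 3: the kept part costs more than B/2, so the
  density condition makes the discarded part worth at most twice the kept part.
  Hence opt \<le> 9 f(X') + 9 f(Y') + f {e_max} \<le> 19 f(S).\<close>

section \<open>Truncation to a feasible suffix\<close>

text \<open>Most recent element first, as in la_step.\<close>
fun density_chain :: "('a set \<Rightarrow> real) \<Rightarrow> ('a \<Rightarrow> real) \<Rightarrow> real \<Rightarrow> 'a list \<Rightarrow> bool" where
  "density_chain f c B [] = True"
| "density_chain f c B (e # xs) \<longleftrightarrow> density_chain f c B xs \<and> e \<notin> set xs \<and>
      c e * f (set xs) / B \<le> f (insert e (set xs)) - f (set xs)"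

lemma density_chain_distinct: "density_chain f c B zs \<Longrightarrow> distinct zs"
  by (induction zs) auto

lemma last_feasible_prefix:
  assumes dist: "distinct zs" and cpos: "\<forall>e\<in>set zs. 0 < c e" and "0 \<le> B"
  obtains j where "j \<le> length zs" "last_feasible c B zs = set (take j zs)"
    "sum c (set (take j zs)) \<le> B" "j < length zs \<Longrightarrow> B < sum c (set (take j zs)) + c (zs ! j)"
proof -
  define g where "g = (\<lambda>j. sum c (set (take j zs)))"
  define P where "P = (\<lambda>j. j \<le> length zs \<and> g j \<le> B)"
  have g_mono: "g j \<le> g j'" if "j \<le> j'" for j j'
  proof -
    have "set (take j zs) \<subseteq> set (take j' zs)" using that by (rule set_take_subset_set_take)
    then show ?thesis unfolding g_def using cpos
      by (intro sum_mono2) (auto intro: less_imp_le dest: in_set_takeD)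
  qed
  have g_Suc: "g (Suc j) = g j + c (zs ! j)" if "j < length zs" for j
  proof -
    have tk: "take (Suc j) zs = take j zs @ [zs ! j]" using that by (simp add: take_Suc_conv_app_nth)
    have "distinct (take (Suc j) zs)" using dist by simp
    then show ?thesis unfolding g_def using tk by simp
  qed
  define k where "k = Max {j. P j}"
  have fin: "finite {j. P j}" unfolding P_def by simp
  have "P 0" unfolding P_def g_def using \<open>0 \<le> B\<close> by simp
  then have Pk: "P k" and k_max: "\<And>y. P y \<Longrightarrow> y \<le> k" unfolding k_def using fin Max_in by auto
  define j where "j = arg_max g P"
  have j: "P j \<and> (\<forall>y. P y \<longrightarrow> g y \<le> g j)" unfolding j_def
    by (rule arg_maxI[where P = P and f = g and x = k]) (use Pk k_max g_mono in \<open>auto simp: not_less\<close>)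
  show thesis
  proof
    show "last_feasible c B zs = set (take j zs)"
      unfolding last_feasible_def j_def g_def P_def by simp
    show "j \<le> length zs" "sum c (set (take j zs)) \<le> B" using j unfolding P_def g_def by auto
    assume "j < length zs"
    then have "0 < c (zs ! j)" using cpos by simp
    then have "\<not> P (Suc j)" using j g_Suc[OF \<open>j < length zs\<close>] by force
    then show "B < sum c (set (take j zs)) + c (zs ! j)"
      using \<open>j < length zs\<close> g_Suc unfolding P_def g_def by auto
  qed
qed

locale budgeted_submodular =
  fixes f :: "'a set \<Rightarrow> real" and c :: "'a \<Rightarrow> real" and B :: real and V :: "'a set"
  assumes finite_V: "finite V" and submodular: "submodular_on V f"
    and nonneg: "\<And>S. S \<subseteq> V \<Longrightarrow> 0 \<le> f S"
    and f_empty: "f {} = 0" and B_pos: "0 < B"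
    and c_pos: "\<And>e. e \<in> V \<Longrightarrow> 0 < c e" and c_le_B: "\<And>e. e \<in> V \<Longrightarrow> c e \<le> B"
begin

lemma submodular_ineq: "A \<subseteq> V \<Longrightarrow> C \<subseteq> V \<Longrightarrow> f (A \<union> C) + f (A \<inter> C) \<le> f A + f C"
  using submodular unfolding submodular_on_def by blast

lemma subadditive: "A \<subseteq> V \<Longrightarrow> C \<subseteq> V \<Longrightarrow> A \<inter> C = {} \<Longrightarrow> f (A \<union> C) \<le> f A + f C"
  using submodular_ineq[of A C] f_empty by simp

lemma marginal_antimono:
  assumes "P \<subseteq> X" "X \<subseteq> V" "u \<in> V" "u \<notin> X"
  shows "f (insert u X) - f X \<le> f (insert u P) - f P"
proof -
  have "insert u P \<union> X = insert u X" "insert u P \<inter> X = P" "insert u P \<subseteq> V" using assms by auto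
  then show ?thesis using submodular_ineq[of "insert u P" X] assms(2) by auto
qed

lemma sum_cost_nonneg: "A \<subseteq> V \<Longrightarrow> 0 \<le> sum c A"
  by (rule sum_nonneg) (auto dest: c_pos intro: less_imp_le)

lemma sum_cost_mono: "A \<subseteq> C \<Longrightarrow> C \<subseteq> V \<Longrightarrow> sum c A \<le> sum c C"
  using finite_subset[OF _ finite_V] by (intro sum_mono2) (auto dest: c_pos intro: less_imp_le)

lemma density_chain_drop_gain:
  "density_chain f c B zs \<Longrightarrow> set zs \<subseteq> V \<Longrightarrow>
   sum c (set (take j zs)) * f (set (drop j zs)) / B \<le> f (set zs) - f (set (drop j zs))"
proof (induction zs arbitrary: j)
  case Nil
  then show ?case by simp
next
  case (Cons e zs)
  show ?case
  proof (cases j)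
    case 0
    then show ?thesis by simp
  next
    case (Suc j')
    let ?T = "set (take j' zs)" and ?D = "set (drop j' zs)" and ?Z = "set zs"
    have chain: "density_chain f c B zs" "e \<notin> ?Z" "c e * f ?Z / B \<le> f (insert e ?Z) - f ?Z"
      and ZV: "?Z \<subseteq> V" and ce: "0 < c e" using Cons.prems c_pos by auto
    have IH: "sum c ?T * f ?D / B \<le> f ?Z - f ?D" using Cons.IH chain ZV by auto
    have "?T \<subseteq> V" "?D \<subseteq> V" using ZV by (meson set_take_subset set_drop_subset subset_trans)+
    then have "0 \<le> sum c ?T * f ?D / B" using nonneg sum_cost_nonneg B_pos by simp
    with IH have "c e * f ?D / B \<le> c e * f ?Z / B"
      using ce B_pos by (simp add: divide_right_mono)
    moreover have "e \<notin> ?T" using chain(2) in_set_takeD by fast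
    then have "sum c (set (take j (e # zs))) = c e + sum c ?T" using Suc by simp
    ultimately show ?thesis using IH chain(3) Suc by (simp add: distrib_right add_divide_distrib)
  qed
qed

lemma last_feasible_le_3:
  assumes chain: "density_chain f c B zs" and ZV: "set zs \<subseteq> V" and small: "\<forall>e\<in>set zs. c e \<le> B/2"
  shows "last_feasible c B zs \<subseteq> set zs" "sum c (last_feasible c B zs) \<le> B"
    "f (set zs) \<le> 3 * f (last_feasible c B zs)"
proof -
  have dist: "distinct zs" using chain by (rule density_chain_distinct)
  obtain j where j: "j \<le> length zs" "last_feasible c B zs = set (take j zs)"
    "sum c (set (take j zs)) \<le> B" "j < length zs \<Longrightarrow> B < sum c (set (take j zs)) + c (zs ! j)"
    using last_feasible_prefix[OF dist _ less_imp_le[OF B_pos]] ZV c_pos by blast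
  let ?T = "set (take j zs)" and ?R = "set (drop j zs)"
  show "last_feasible c B zs \<subseteq> set zs" "sum c (last_feasible c B zs) \<le> B"
    using j by (auto dest: in_set_takeD)
  have TV: "?T \<subseteq> V" and RV: "?R \<subseteq> V" using ZV by (meson set_take_subset set_drop_subset subset_trans)+
  show "f (set zs) \<le> 3 * f (last_feasible c B zs)"
  proof (cases "j < length zs")
    case False
    then show ?thesis using j(2) nonneg ZV by simp
  next
    case True
    have "c (zs ! j) \<le> B/2" using True small by simp
    then have "B/2 \<le> sum c ?T" using j(4)[OF True] by linarith
    then have "(B/2) * f ?R / B \<le> sum c ?T * f ?R / B"
      using nonneg[OF RV] B_pos by (intro divide_right_mono mult_right_mono) auto
    moreover have "(B/2) * f ?R / B = f ?R / 2" using B_pos by simp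
    ultimately have "f ?R / 2 \<le> f (set zs) - f ?R"
      using density_chain_drop_gain[OF chain ZV, of j] by linarith
    moreover have "f (set zs) \<le> f ?T + f ?R"
      using subadditive[OF TV RV] dist
      by (metis append_take_drop_id set_append set_take_disj_set_drop_if_distinct order.refl)
    ultimately show ?thesis unfolding j(2) by linarith
  qed
qed

section \<open>Charging the optimum\<close>

lemma f_union_le_sum_marginals:
  assumes "A \<subseteq> V" "S \<subseteq> V" "A \<inter> S = {}"
  shows "f (A \<union> S) \<le> f S + (\<Sum>u\<in>A. f (insert u S) - f S)"
proof -
  have "finite A" using assms(1) finite_V finite_subset by blast
  then show ?thesis using assms
  proof (induction A rule: finite_induct)
    case empty
    then show ?case by simp
  next
    case (insert a A)
    have "insert a S \<union> (A \<union> S) = insert a A \<union> S" "insert a S \<inter> (A \<union> S) = S"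
      "insert a S \<subseteq> V" "A \<union> S \<subseteq> V" using insert.hyps insert.prems by auto
    then have "f (insert a A \<union> S) + f S \<le> f (insert a S) + f (A \<union> S)"
      using submodular_ineq[of "insert a S" "A \<union> S"] by simp
    then show ?case using insert by simp
  qed
qed

text \<open>P is the set X as it was when u was processed; by submodularity the bound then also holds
  for the marginal of u to X itself.\<close>
definition charged :: "'a set \<Rightarrow> ('a \<Rightarrow> real) \<Rightarrow> 'a \<Rightarrow> bool" where
  "charged X h u \<longleftrightarrow> (\<exists>P\<subseteq>X. f (insert u P) - f P \<le> c u * f X / B + h u)"

definition value_split :: "('a \<Rightarrow> real) \<Rightarrow> 'a set \<Rightarrow> bool" where
  "value_split g Y \<longleftrightarrow> (\<forall>u. 0 \<le> g u) \<and> (\<forall>u. u \<notin> Y \<longrightarrow> g u = 0) \<and> sum g Y = f Y"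

lemma charged_mono:
  assumes "charged X h u" "X \<subseteq> X'" "f X \<le> f X'" "0 \<le> c u"
  shows "charged X' h u"
proof -
  from assms(1) obtain P where P: "P \<subseteq> X" "f (insert u P) - f P \<le> c u * f X / B + h u"
    unfolding charged_def by blast
  have "c u * f X / B \<le> c u * f X' / B"
    using assms(3,4) B_pos by (simp add: divide_right_mono mult_left_mono)
  then show ?thesis unfolding charged_def using P assms(2) by (intro exI[of _ P]) auto
qed

lemma value_split_sum_le:
  assumes "value_split g Y" "A \<subseteq> V" "Y \<subseteq> V"
  shows "sum g A \<le> f Y"
proof -
  have fin: "finite (A \<union> Y)" using assms(2,3) finite_V finite_subset by blast
  have "sum g A \<le> sum g (A \<union> Y)"
    using assms(1) fin by (intro sum_mono2) (auto simp: value_split_def)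
  also have "\<dots> = sum g Y"
    using assms(1) fin by (intro sum.mono_neutral_right) (auto simp: value_split_def)
  finally show ?thesis using assms(1) by (simp add: value_split_def)
qed

lemma value_split_insert:
  assumes "value_split g X" "e \<notin> X" "X \<subseteq> V" "f X \<le> f (insert e X)"
  shows "value_split (g(e := f (insert e X) - f X)) (insert e X)"
proof -
  have "finite X" using assms(3) finite_V finite_subset by blast
  moreover have "sum (g(e := f (insert e X) - f X)) X = sum g X"
    using assms(2) by (intro sum.cong) auto
  ultimately show ?thesis using assms unfolding value_split_def by auto
qed

lemma charged_union_bound:
  assumes "A \<subseteq> V" "X \<subseteq> V" "A \<inter> X = {}" "sum c A \<le> B" "\<forall>u\<in>A. charged X h u"
  shows "f (A \<union> X) \<le> 2 * f X + sum h A"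
proof -
  have "f (A \<union> X) \<le> f X + (\<Sum>u\<in>A. f (insert u X) - f X)"
    using f_union_le_sum_marginals assms(1-3) by blast
  also have "(\<Sum>u\<in>A. f (insert u X) - f X) \<le> (\<Sum>u\<in>A. c u * f X / B + h u)"
  proof (rule sum_mono)
    fix u assume u: "u \<in> A"
    then obtain P where "P \<subseteq> X" "f (insert u P) - f P \<le> c u * f X / B + h u"
      using assms(5) unfolding charged_def by blast
    moreover have "u \<in> V" "u \<notin> X" using u assms(1,3) by auto
    ultimately show "f (insert u X) - f X \<le> c u * f X / B + h u"
      using marginal_antimono[of P X u] assms(2) by linarith
  qed
  also have "(\<Sum>u\<in>A. c u * f X / B + h u) = sum c A * f X / B + sum h A"
    by (simp add: sum.distrib sum_distrib_right sum_divide_distrib)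
  also have "sum c A * f X / B \<le> f X"
    using mult_right_mono[OF assms(4) nonneg[OF assms(2)]] B_pos by (simp add: divide_le_eq mult.commute)
  finally show ?thesis by linarith
qed

definition cross_charged :: "'a set \<Rightarrow> 'a set \<Rightarrow> 'a set \<Rightarrow> bool" where
  "cross_charged D X Y \<longleftrightarrow> (\<exists>gX gY. value_split gX X \<and> value_split gY Y \<and>
     (\<forall>u\<in>D - X. charged X gY u) \<and> (\<forall>u\<in>D - Y. charged Y gX u))"

lemma cross_charged_swap: "cross_charged D X Y \<Longrightarrow> cross_charged D Y X"
  unfolding cross_charged_def by blast

lemma cross_charged_bound:
  assumes "cross_charged D X Y" "D \<subseteq> V" "X \<subseteq> V" "Y \<subseteq> V" "X \<inter> Y = {}"
    and "T \<subseteq> D" "sum c T \<le> B"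
  shows "f T \<le> 3 * f X + 3 * f Y"
proof -
  have side: "f (T \<union> X) \<le> 2 * f X + f Y"
    if "value_split h Y" "\<forall>u\<in>D - X. charged X h u" "X \<subseteq> V" "Y \<subseteq> V" for X Y h
  proof -
    have TV: "T \<subseteq> V" using assms(2,6) by blast
    then have "T - X \<subseteq> V" "sum c (T - X) \<le> B"
      using assms(7) sum_cost_mono[of "T - X" T] by auto
    moreover have "\<forall>u\<in>T - X. charged X h u" using that(2) assms(6) by blast
    ultimately have "f ((T - X) \<union> X) \<le> 2 * f X + sum h (T - X)"
      using charged_union_bound[of "T - X" X h] that(3) by auto
    then show ?thesis using value_split_sum_le[OF that(1) \<open>T - X \<subseteq> V\<close> that(4)] by simp
  qed
  obtain gX gY where g: "value_split gX X" "value_split gY Y"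
    "\<forall>u\<in>D - X. charged X gY u" "\<forall>u\<in>D - Y. charged Y gX u"
    using assms(1) unfolding cross_charged_def by blast
  have TV: "T \<subseteq> V" using assms(2,6) by blast
  have "T \<union> X \<subseteq> V" "T \<union> Y \<subseteq> V" "(T \<union> X) \<inter> (T \<union> Y) = T" using TV assms(3-5) by auto
  then have "f T \<le> f (T \<union> X) + f (T \<union> Y)"
    using submodular_ineq[of "T \<union> X" "T \<union> Y"] nonneg[of "(T \<union> X) \<union> (T \<union> Y)"] by simp
  with side[OF g(2,3) assms(3,4)] side[OF g(1,4) assms(4,3)] show ?thesis by linarith
qed

section \<open>The invariant of the main loop\<close>

lemma cross_charged_insert_left:
  assumes cc: "cross_charged D X Y" and "D \<subseteq> V" "X \<subseteq> V" "e \<in> V" "e \<notin> X"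
    and okx: "c e * f X / B \<le> f (insert e X) - f X"
    and okx_over_y: "f (insert e Y) - f Y \<le> c e * f Y / B + (f (insert e X) - f X)"
  shows "cross_charged (insert e D) (insert e X) Y"
proof -
  obtain gX gY where g: "value_split gX X" "value_split gY Y"
    "\<forall>u\<in>D - X. charged X gY u" "\<forall>u\<in>D - Y. charged Y gX u"
    using cc unfolding cross_charged_def by blast
  have "0 \<le> c e * f X / B" using c_pos[OF \<open>e \<in> V\<close>] nonneg[OF \<open>X \<subseteq> V\<close>] B_pos by simp
  then have X_le: "f X \<le> f (insert e X)" using okx by linarith
  define gX' where "gX' = gX(e := f (insert e X) - f X)"
  have "value_split gX' (insert e X)"
    unfolding gX'_def using value_split_insert g(1) assms(3,5) X_le by blast
  moreover have "charged (insert e X) gY u" if "u \<in> insert e D - insert e X" for u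
    using charged_mono[OF _ _ X_le] g(3) that c_pos \<open>D \<subseteq> V\<close> by (force intro: less_imp_le)
  moreover have "charged Y gX' u" if "u \<in> insert e D - Y" for u
  proof (cases "u = e")
    case True
    then show ?thesis using okx_over_y unfolding charged_def gX'_def by auto
  next
    case False
    then show ?thesis using g(4) that unfolding gX'_def charged_def by auto
  qed
  ultimately show ?thesis using g(2) unfolding cross_charged_def by blast
qed

lemma cross_charged_insert_rejected:
  assumes cc: "cross_charged D X Y"
    and "f (insert e X) - f X < c e * f X / B" "f (insert e Y) - f Y < c e * f Y / B"
  shows "cross_charged (insert e D) X Y"
proof -
  obtain gX gY where g: "value_split gX X" "value_split gY Y"
    "\<forall>u\<in>D - X. charged X gY u" "\<forall>u\<in>D - Y. charged Y gX u"
    using cc unfolding cross_charged_def by blast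
  have "charged X gY e" "charged Y gX e"
    using assms(2,3) g(1,2) unfolding charged_def value_split_def
    by (metis add_increasing2 less_imp_le order.refl)+
  with g show ?thesis unfolding cross_charged_def by blast
qed

definition loop_inv :: "'a set \<Rightarrow> 'a list \<Rightarrow> 'a list \<Rightarrow> real \<Rightarrow> real \<Rightarrow> bool" where
  "loop_inv D xs ys fx fy \<longleftrightarrow> fx = f (set xs) \<and> fy = f (set ys) \<and>
     D \<subseteq> V \<and> set xs \<subseteq> D \<and> set ys \<subseteq> D \<and> set xs \<inter> set ys = {} \<and>
     density_chain f c B xs \<and> density_chain f c B ys \<and> cross_charged D (set xs) (set ys)"

lemma loop_inv_swap: "loop_inv D xs ys fx fy \<Longrightarrow> loop_inv D ys xs fy fx"
  unfolding loop_inv_def using cross_charged_swap by blast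

lemma loop_inv_insert_left:
  assumes inv: "loop_inv D xs ys fx fy" and e: "e \<in> V" "e \<notin> D"
    and okx: "c e * fx / B \<le> f (insert e (set xs)) - fx"
    and okx_over_y: "f (insert e (set ys)) - fy \<le> c e * fy / B + (f (insert e (set xs)) - fx)"
  shows "loop_inv (insert e D) (e # xs) ys (f (insert e (set xs))) fy"
proof -
  have "e \<notin> set xs" "e \<notin> set ys" "set xs \<subseteq> V" using inv e unfolding loop_inv_def by auto
  moreover have "cross_charged (insert e D) (insert e (set xs)) (set ys)"
    using cross_charged_insert_left inv e okx okx_over_y \<open>e \<notin> set xs\<close> \<open>set xs \<subseteq> V\<close>
    unfolding loop_inv_def by blast
  ultimately show ?thesis using inv e okx unfolding loop_inv_def by auto
qed

lemma loop_inv_insert_rejected: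
  assumes inv: "loop_inv D xs ys fx fy" and e: "e \<in> V"
    and "f (insert e (set xs)) - fx < c e * fx / B" "f (insert e (set ys)) - fy < c e * fy / B"
  shows "loop_inv (insert e D) xs ys fx fy"
  using assms cross_charged_insert_rejected unfolding loop_inv_def by blast

end

lemma la_step_unfold:
  fixes f :: "'a set \<Rightarrow> real" and c :: "'a \<Rightarrow> real" and xs ys :: "'a list" and fx fy :: real
  assumes "0 < c e" "0 < B"
  defines "a \<equiv> f (insert e (set xs)) - fx" and "b \<equiv> f (insert e (set ys)) - fy"
  shows "la_step f c B tb (xs, ys, fx, fy, q, i) e =
    (if c e * fx / B \<le> a \<and> (b < c e * fy / B \<or> b < a \<or> (a = b \<and> tb i))
     then (e # xs, ys, f (insert e (set xs)), fy, q + 2, Suc i)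
     else if c e * fy / B \<le> b then (xs, e # ys, fx, f (insert e (set ys)), q + 2, Suc i)
     else (xs, ys, fx, fy, q + 2, Suc i))"
proof -
  have "(fx / B \<le> a / c e) = (c e * fx / B \<le> a)" "(fy / B \<le> b / c e) = (c e * fy / B \<le> b)"
    using assms(1,2) by (simp_all add: pos_le_divide_eq mult.commute)
  moreover have "(b / c e < a / c e) = (b < a)" "(a / c e = b / c e) = (a = b)"
    using assms(1) by (simp_all add: divide_less_cancel)
  ultimately show ?thesis unfolding la_step_def Let_def a_def b_def by (auto simp: not_le)
qed

context budgeted_submodular
begin

lemma loop_inv_step:
  assumes inv: "loop_inv D xs ys fx fy" and e: "e \<in> V" "e \<notin> D"
    and step: "la_step f c B tb (xs, ys, fx, fy, q, i) e = (xs', ys', fx', fy', q', i')"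
  shows "loop_inv (insert e D) xs' ys' fx' fy'"
proof -
  define a where "a = f (insert e (set xs)) - fx"
  define b where "b = f (insert e (set ys)) - fy"
  have "fx = f (set xs)" "fy = f (set ys)" "set xs \<subseteq> V" "set ys \<subseteq> V"
    using inv unfolding loop_inv_def by auto
  then have shares: "0 \<le> c e * fx / B" "0 \<le> c e * fy / B"
    using nonneg c_pos[OF e(1)] B_pos by simp_all
  note unfold = la_step_unfold[where f = f and c = c and B = B and e = e and xs = xs and ys = ys
      and fx = fx and fy = fy and tb = tb and q = q and i = i, OF c_pos[OF e(1)] B_pos, folded a_def b_def]
  consider (to_X) "c e * fx / B \<le> a" "b < c e * fy / B \<or> b < a \<or> (a = b \<and> tb i)"
    | (to_Y) "\<not> (c e * fx / B \<le> a \<and> (b < c e * fy / B \<or> b < a \<or> (a = b \<and> tb i)))"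
        "c e * fy / B \<le> b"
    | (rejected) "a < c e * fx / B" "b < c e * fy / B"
    by fastforce
  then show ?thesis
  proof cases
    case to_X
    then have "b \<le> c e * fy / B + a" using shares by auto
    then show ?thesis
      using loop_inv_insert_left[OF inv e] to_X step unfold unfolding a_def b_def by auto
  next
    case to_Y
    then have "a \<le> c e * fx / B + b" using shares by auto
    then show ?thesis
      using loop_inv_swap[OF loop_inv_insert_left[OF loop_inv_swap[OF inv] e]] to_Y step unfold
      unfolding a_def b_def by auto
  next
    case rejected
    then show ?thesis
      using loop_inv_insert_rejected[OF inv e(1)] step unfold unfolding a_def b_def by auto
  qed
qed

lemma loop_inv_foldl:
  "loop_inv D xs ys fx fy \<Longrightarrow> set ws \<subseteq> V \<Longrightarrow> distinct ws \<Longrightarrow> set ws \<inter> D = {} \<Longrightarrow>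
   foldl (la_step f c B tb) (xs, ys, fx, fy, q, i) ws = (xs', ys', fx', fy', q', i') \<Longrightarrow>
   loop_inv (D \<union> set ws) xs' ys' fx' fy'"
proof (induction ws arbitrary: D xs ys fx fy q i)
  case Nil
  then show ?case by simp
next
  case (Cons e ws)
  obtain xs2 ys2 fx2 fy2 q2 i2
    where step: "la_step f c B tb (xs, ys, fx, fy, q, i) e = (xs2, ys2, fx2, fy2, q2, i2)"
    by (cases "la_step f c B tb (xs, ys, fx, fy, q, i) e") auto
  have "loop_inv (insert e D) xs2 ys2 fx2 fy2"
    using loop_inv_step[OF Cons.prems(1) _ _ step] Cons.prems by auto
  then show ?case using Cons.IH[of "insert e D" xs2 ys2 fx2 fy2 q2 i2] Cons.prems step by auto
qed

end

lemma la_step_queries: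
  "la_step f c B tb (xs, ys, fx, fy, q, i) e = (xs', ys', fx', fy', q', i') \<Longrightarrow> q' = q + 2"
  unfolding la_step_def Let_def by (auto split: if_splits)

lemma foldl_la_step_queries:
  "foldl (la_step f c B tb) (xs, ys, fx, fy, q, i) ws = (xs', ys', fx', fy', q', i') \<Longrightarrow>
   q' = q + 2 * length ws"
proof (induction ws arbitrary: xs ys fx fy q i)
  case Nil
  then show ?case by simp
next
  case (Cons e ws)
  obtain xs2 ys2 fx2 fy2 q2 i2
    where step: "la_step f c B tb (xs, ys, fx, fy, q, i) e = (xs2, ys2, fx2, fy2, q2, i2)"
    by (cases "la_step f c B tb (xs, ys, fx, fy, q, i) e") auto
  then show ?case using Cons.IH[of xs2 ys2 fx2 fy2 q2 i2] Cons.prems la_step_queries[OF step] by simp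
qed

lemma emax_scan_foldl:
  fixes f :: "'a set \<Rightarrow> real"
  assumes "foldl (\<lambda>(b, fb, q) e. let fe = f {e} in if fb < fe then (e, fe, Suc q) else (b, fb, Suc q))
     (b, f {b}, q) ys = (b', fb', q')"
  shows "fb' = f {b'} \<and> b' \<in> insert b (set ys) \<and> (\<forall>e\<in>insert b (set ys). f {e} \<le> fb') \<and>
    q' = q + length ys"
  using assms
proof (induction ys arbitrary: b q)
  case Nil
  then show ?case by auto
next
  case (Cons e ys)
  define b2 where "b2 = (if f {b} < f {e} then e else b)"
  have "(\<lambda>(b, fb, q) e. let fe = f {e} in if fb < fe then (e, fe, Suc q) else (b, fb, Suc q))
     (b, f {b}, q) e = (b2, f {b2}, Suc q)" unfolding b2_def Let_def by auto
  then have "fb' = f {b'} \<and> b' \<in> insert b2 (set ys) \<and> (\<forall>e\<in>insert b2 (set ys). f {e} \<le> fb') \<and>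
      q' = Suc q + length ys"
    using Cons.IH[of b2 "Suc q"] Cons.prems by auto
  moreover have "f {b} \<le> f {b2}" "f {e} \<le> f {b2}" "b2 \<in> {b, e}" unfolding b2_def by auto
  ultimately show ?case by auto
qed

lemma emax_scan_correct:
  assumes "vs \<noteq> []" "emax_scan f vs = (em, fem, q)"
  shows "fem = f {em}" "em \<in> set vs" "\<forall>e\<in>set vs. f {e} \<le> fem" "q = length vs"
  using assms emax_scan_foldl[of f "hd vs" 1 "tl vs" em fem q]
  unfolding emax_scan_def by (cases vs; auto)+

lemma LA_queries:
  "snd (LA f c B tb vs) = length vs + 2 * length (filter (\<lambda>e. c e \<le> B / 2) vs) + 3"
  if "vs \<noteq> []"
proof -
  obtain em fem q1 where E: "emax_scan f vs = (em, fem, q1)" by (cases "emax_scan f vs") auto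
  obtain xs ys fx fy q2 i where L: "la_loop f c B tb vs = (xs, ys, fx, fy, q2, i)"
    by (cases "la_loop f c B tb vs") auto
  have "q1 = length vs" using emax_scan_correct[OF that E] by simp
  moreover have "q2 = 1 + 2 * length (filter (\<lambda>e. c e \<le> B / 2) vs)"
    using foldl_la_step_queries L unfolding la_loop_def by fastforce
  ultimately show ?thesis unfolding LA_def E L Let_def by (simp split: if_split)
qed

lemma LA_output:
  assumes "emax_scan f vs = (em, fem, q1)" "la_loop f c B tb vs = (xs, ys, fx, fy, q2, i)"
    and "fem = f {em}" "S = fst (LA f c B tb vs)"
  shows "S \<in> {last_feasible c B xs, last_feasible c B ys, {em}}"
    "f (last_feasible c B xs) \<le> f S" "f (last_feasible c B ys) \<le> f S" "fem \<le> f S"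
  using assms unfolding LA_def Let_def by (auto split: if_splits)

lemma opt_attained:
  assumes "finite V" "0 \<le> B"
  obtains T where "T \<subseteq> V" "sum c T \<le> B" "opt f c B V = f T"
proof -
  let ?F = "{f T | T. T \<subseteq> V \<and> sum c T \<le> B}"
  have "?F = f ` {T. T \<subseteq> V \<and> sum c T \<le> B}" by auto
  then have "finite ?F" using assms(1) by simp
  moreover have "f {} \<in> ?F" using assms(2) by auto
  ultimately have "Max ?F \<in> ?F" by (intro Max_in) auto
  then show thesis using that unfolding opt_def by blast
qed

context budgeted_submodular
begin

lemma le_small_part_plus_max_singleton:
  assumes TV: "T \<subseteq> V" and T_cost: "sum c T \<le> B" and m: "\<forall>e\<in>V. f {e} \<le> m" "0 \<le> m"
  shows "f T \<le> f {e\<in>T. c e \<le> B/2} + m"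
proof -
  let ?S = "{e\<in>T. c e \<le> B/2}" and ?L = "{e\<in>T. B/2 < c e}"
  have "f ?L \<le> m"
  proof (cases "?L = {}")
    case True
    then show ?thesis by (simp only: True f_empty m(2))
  next
    case False
    then obtain a where a: "a \<in> ?L" by blast
    have "?L = {a}"
    proof (rule ccontr)
      assume "?L \<noteq> {a}"
      then obtain a' where a': "a' \<in> ?L" "a' \<noteq> a" using a by blast
      then have "c a + c a' = sum c {a, a'}" by simp
      also have "\<dots> \<le> sum c T" using a a' TV by (intro sum_cost_mono) auto
      finally show False using a a' T_cost by simp
    qed
    then show ?thesis using a m(1) TV by auto
  qed
  moreover have "?S \<union> ?L = T" "?S \<inter> ?L = {}" by auto
  then have "f T \<le> f ?S + f ?L" using subadditive[of ?S ?L] TV by auto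
  ultimately show ?thesis by linarith
qed

lemma loop_inv_la_loop:
  assumes "V = set vs" "distinct vs" "la_loop f c B tb vs = (xs, ys, fx, fy, q, i)"
  shows "loop_inv {e\<in>V. c e \<le> B/2} xs ys fx fy"
proof -
  have "value_split (\<lambda>_. 0) {}" unfolding value_split_def using f_empty by simp
  then have "loop_inv {} [] [] (f {}) (f {})"
    unfolding loop_inv_def cross_charged_def by auto
  then show ?thesis
    using loop_inv_foldl[of "{}" "[]" "[]" "f {}" "f {}" "filter (\<lambda>e. c e \<le> B / 2) vs"] assms
    unfolding la_loop_def by auto
qed

lemma LA_correct:
  fixes tb :: "nat \<Rightarrow> bool"
  assumes V: "V = set vs" and "distinct vs" "vs \<noteq> []"
  defines "S \<equiv> fst (LA f c B tb vs)"
  shows "S \<subseteq> V" "sum c S \<le> B" "opt f c B V \<le> 19 * f S"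
proof -
  obtain em fem q1 where E: "emax_scan f vs = (em, fem, q1)" by (cases "emax_scan f vs") auto
  obtain xs ys fx fy q2 i where L: "la_loop f c B tb vs = (xs, ys, fx, fy, q2, i)"
    by (cases "la_loop f c B tb vs") auto
  have em: "fem = f {em}" "em \<in> V" "\<forall>e\<in>V. f {e} \<le> fem"
    using emax_scan_correct[OF \<open>vs \<noteq> []\<close> E] V by auto
  note S = LA_output[OF E L em(1) refl, folded S_def]
  define D where "D = {e\<in>V. c e \<le> B/2}"
  have "loop_inv D xs ys fx fy" unfolding D_def using loop_inv_la_loop V assms(2) L by blast
  then have inv: "density_chain f c B xs" "density_chain f c B ys" "cross_charged D (set xs) (set ys)"
      "set xs \<inter> set ys = {}" "set xs \<subseteq> D" "set ys \<subseteq> D"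
    unfolding loop_inv_def by auto
  have DV: "D \<subseteq> V" and small: "\<forall>e\<in>D. c e \<le> B/2" unfolding D_def by auto
  have "set xs \<subseteq> V" "set ys \<subseteq> V" "\<forall>e\<in>set xs. c e \<le> B/2" "\<forall>e\<in>set ys. c e \<le> B/2"
    using inv(5,6) DV small by auto
  note X' = last_feasible_le_3[OF inv(1) this(1,3)] and Y' = last_feasible_le_3[OF inv(2) this(2,4)]
  show "S \<subseteq> V" using S(1) X'(1) Y'(1) \<open>set xs \<subseteq> V\<close> \<open>set ys \<subseteq> V\<close> em(2) by auto
  show "sum c S \<le> B" using S(1) X'(2) Y'(2) c_le_B[OF em(2)] by auto
  obtain T where T: "T \<subseteq> V" "sum c T \<le> B" "opt f c B V = f T"
    using opt_attained[OF finite_V less_imp_le[OF B_pos]] by blast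
  have "f T \<le> f {e\<in>T. c e \<le> B/2} + fem"
    using le_small_part_plus_max_singleton[OF T(1,2) em(3)] em(1,2) nonneg by auto
  also have "f {e\<in>T. c e \<le> B/2} \<le> 3 * f (set xs) + 3 * f (set ys)"
  proof (rule cross_charged_bound[OF inv(3) DV _ _ inv(4)])
    show "set xs \<subseteq> V" "set ys \<subseteq> V" "{e\<in>T. c e \<le> B/2} \<subseteq> D" using inv(5,6) DV T(1) D_def by auto
    have "sum c {e\<in>T. c e \<le> B/2} \<le> sum c T" using T(1) by (intro sum_cost_mono) auto
    then show "sum c {e\<in>T. c e \<le> B/2} \<le> B" using T(2) by linarith
  qed
  finally show "opt f c B V \<le> 19 * f S"
    using S(2-4) X'(3) Y'(3) T(3) by linarith
qed

end

theorem theorem1: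
  shows "(\<exists>C::real. \<forall>(f::'a set \<Rightarrow> real) c B tb vs.
            valid_instance f c B vs \<longrightarrow> real (snd (LA f c B tb vs)) \<le> C * real (length vs))
       \<and> (\<forall>(f::'a set \<Rightarrow> real) c B tb vs. valid_instance f c B vs \<longrightarrow>
            fst (LA f c B tb vs) \<subseteq> set vs \<and>
            sum c (fst (LA f c B tb vs)) \<le> B \<and>
            opt f c B (set vs) \<le> 19 * f (fst (LA f c B tb vs)))"
proof (intro conjI allI impI exI)
  fix f :: "'a set \<Rightarrow> real" and c B tb and vs :: "'a list"
  assume valid: "valid_instance f c B vs"
  then have "vs \<noteq> []" "distinct vs" unfolding valid_instance_def by auto
  have "length (filter (\<lambda>e. c e \<le> B / 2) vs) \<le> length vs" by (rule length_filter_le)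
  moreover have "1 \<le> length vs" using \<open>vs \<noteq> []\<close> by (cases vs) auto
  ultimately show "real (snd (LA f c B tb vs)) \<le> 6 * real (length vs)"
    unfolding LA_queries[OF \<open>vs \<noteq> []\<close>] by linarith
  interpret budgeted_submodular f c B "set vs"
    using valid unfolding valid_instance_def by unfold_locales auto
  show "fst (LA f c B tb vs) \<subseteq> set vs" "sum c (fst (LA f c B tb vs)) \<le> B"
    "opt f c B (set vs) \<le> 19 * f (fst (LA f c B tb vs))"
    using LA_correct[OF refl \<open>distinct vs\<close> \<open>vs \<noteq> []\<close>] by auto
qed

end
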